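(* Let $X$ be a set and $\lambda,q\in\mathbf{k}$. Then $(\mathrm{DT}(\Delta X),\prec,\succ,\bullet,d_X)$ is a differential $q$-tridendriform algebra of weight $\lambda$.
   Context: $\mathbf{k}$ is a commutative unital ring. For a set $Y$, a valently decorated Schröder tree over $Y$ is a planar rooted tree in which every internal vertex has $k\ge2$ (ordered) children and is decorated by an element of $Y^{k-1}$; the tree with one leaf and no internal vertex is denoted $|$. Every tree $\tau\ne|$ is uniquely a grafting $\tau=\bigvee^{m+1}_{y_1,\dots,y_m}(\tau^{(0)},\dots,\tau^{(m)})$ ($m\ge1$) of trees $\tau^{(0)},\dots,\tau^{(m)}$ onto a new root decorated by $(y_1,\dots,y_m)$. Let $\mathrm{DT}(Y)$ be the free $\mathbf{k}$-module on all such trees other than $|$. Define bilinear $\prec,\succ,\bullet$ on $\mathrm{DT}(Y)$ recursively on total depth: for $\tau\ne|$, $|\succ\tau:=\tau\prec|:=\tau$, $|\prec\tau:=\tau\succ|:=0$, $|\bullet\tau:=\tau\bullet|:=0$, with the convention $|\prec|+|\succ|+q\,|\bullet|:=|$; and for $\tau=\bigvee^{m+1}_{x_1,\dots,x_m}(\tau^{(0)},\dots,\tau^{(m)})$, $\sigma=\bigvee^{n+1}_{y_1,\dots,y_n}(\sigma^{(0)},\dots,\sigma^{(n)})$, writing $u\star_q v:=u\succ v+u\prec v+q\,u\bullet v$: $\tau\prec\sigma:=\bigvee^{m+1}_{x_1,\dots,x_m}(\tau^{(0)},\dots,\tau^{(m-1)},\tau^{(m)}\star_q\sigma)$, $\tau\succ\sigma:=\bigvee^{n+1}_{y_1,\dots,y_n}(\tau\star_q\sigma^{(0)},\sigma^{(1)},\dots,\sigma^{(n)})$,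 $\tau\bullet\sigma:=\bigvee^{m+n+1}_{x_1,\dots,x_m,y_1,\dots,y_n}(\tau^{(0)},\dots,\tau^{(m-1)},\tau^{(m)}\star_q\sigma^{(0)},\sigma^{(1)},\dots,\sigma^{(n)})$ (grafting extended multilinearly). Let $\Delta X:=X\times\mathbb N=\{x^{(n)}\mid x\in X,n\ge0\}$ and take $Y=\Delta X$. Define $d_X:\mathrm{DT}(\Delta X)\to\mathrm{DT}(\Delta X)$ linearly by: if $\tau$ has decoration entries $x_1^{(r_1)},\dots,x_N^{(r_N)}$ (all entries of all vertex decorations, listed in some order), then $d_X(\tau)=\sum_{\emptyset\ne S\subseteq\{1,\dots,N\}}\lambda^{|S|-1}\tau_S$, where $\tau_S$ is the tree of the same shape with each entry $x_i^{(r_i)}$, $i\in S$, replaced by $x_i^{(r_i+1)}$. For $q\in\mathbf{k}$, a $q$-tridendriform algebra is a $\mathbf{k}$-module $T$ with bilinear operations $\prec,\succ,\bullet$ such that, writing $\star_q:=\prec+\succ+q\bullet$, for all $a,b,c\in T$: $(a\prec b)\prec c=a\prec(b\star_q c)$, $(a\succ b)\prec c=a\succ(b\prec c)$, $(a\star_q b)\succ c=a\succ(b\succ c)$, $(a\succ b)\bullet c=a\succ(b\bullet c)$, $(a\prec b)\bullet c=a\bullet(b\succ c)$, $(a\bullet b)\prec c=a\bullet(b\prec c)$, $(a\bullet b)\bullet c=a\bullet(b\bullet c)$. A derivation of weight $\lambda$ on it is a linear map $d$ with $d(a\ast b)=d(a)\ast b+a\ast d(b)+\lambda d(a)\ast d(b)$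 for each $\ast\in\{\prec,\succ,\bullet\}$ and all $a,b$; then $(T,\prec,\succ,\bullet,d)$ is a differential $q$-tridendriform algebra of weight $\lambda$. *)

theory Defs
  imports Main "HOL-Library.Poly_Mapping"
begin

section \<open>Valently decorated Schroeder trees\<close>

text \<open>Raw planar rooted trees: Leaf is the one-leaf tree |; Node ys ts is the grafting
  of the trees ts (in order) onto a new root decorated by the word ys.\<close>
datatype 'y vtree = Leaf | Node "'y list" "'y vtree list"

fun wf_vtree :: "'y set \<Rightarrow> 'y vtree \<Rightarrow> bool" where
  "wf_vtree Y Leaf = True"
| "wf_vtree Y (Node ys ts) =
     (length ys \<ge> 1 \<and> length ts = length ys + 1 \<and> set ys \<subseteq> Y \<and> (\<forall>t\<in>set ts. wf_vtree Y t))"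

type_synonym ('y, 'k) lin = "'y vtree \<Rightarrow>\<^sub>0 'k"

definition smul :: "'k::comm_ring_1 \<Rightarrow> ('a \<Rightarrow>\<^sub>0 'k) \<Rightarrow> ('a \<Rightarrow>\<^sub>0 'k)" where
  "smul c p = Poly_Mapping.map (\<lambda>a. c * a) p"

definition lin_ext :: "('a \<Rightarrow> ('b \<Rightarrow>\<^sub>0 'k::comm_ring_1)) \<Rightarrow> ('a \<Rightarrow>\<^sub>0 'k) \<Rightarrow> ('b \<Rightarrow>\<^sub>0 'k)" where
  "lin_ext f p = (\<Sum>t\<in>Poly_Mapping.keys p. smul (Poly_Mapping.lookup p t) (f t))"

definition bilin_ext :: "('a \<Rightarrow> 'a \<Rightarrow> ('b \<Rightarrow>\<^sub>0 'k::comm_ring_1))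
    \<Rightarrow> ('a \<Rightarrow>\<^sub>0 'k) \<Rightarrow> ('a \<Rightarrow>\<^sub>0 'k) \<Rightarrow> ('b \<Rightarrow>\<^sub>0 'k)" where
  "bilin_ext f p r = (\<Sum>t\<in>Poly_Mapping.keys p. \<Sum>s\<in>Poly_Mapping.keys r. smul (Poly_Mapping.lookup p t * Poly_Mapping.lookup r s) (f t s))"

definition graft :: "('y vtree \<Rightarrow> 'y vtree) \<Rightarrow> ('y, 'k::comm_ring_1) lin \<Rightarrow> ('y, 'k) lin" where
  "graft f p = lin_ext (\<lambda>t. Poly_Mapping.single (f t) 1) p"

lemma vtree_size_mem: "t \<in> set ts \<Longrightarrow> size t < size (Node xs ts)"
  by (induction ts) auto

lemma vtree_le_last: "(ts :: 'y vtree list) \<noteq> [] \<Longrightarrow> size (last ts) \<le> size_list size ts"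
  using vtree_size_mem[of "last ts" ts "[]"] by simp

lemma vtree_le_hd: "(ss :: 'y vtree list) \<noteq> [] \<Longrightarrow> size (hd ss) \<le> size_list size ss"
  using vtree_size_mem[of "hd ss" ss "[]"] by simp

lemma vtree_aux1: "(ss :: 'y vtree list) \<noteq> [] \<Longrightarrow> size (hd ss) < Suc (n + size_list size ss)"
  using vtree_le_hd[of ss] by simp

lemma vtree_aux0: "(ts :: 'y vtree list) \<noteq> [] \<Longrightarrow> size (last ts) < Suc (n + size_list size ts)"
  using vtree_le_last[of ts] by simp

lemma vtree_aux2: "(ts :: 'y vtree list) \<noteq> [] \<Longrightarrow> (ss :: 'y vtree list) \<noteq> [] \<Longrightarrow>
   size (last ts) + size (hd ss) < Suc (Suc (a + size_list size ts + (b + size_list size ss)))"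
  using vtree_le_hd[of ss] vtree_le_last[of ts] by simp

lemma vtree_size_last: "ts \<noteq> [] \<Longrightarrow> size (last ts) < size (Node xs ts)"
  by (rule vtree_size_mem) simp

lemma vtree_size_hd: "ss \<noteq> [] \<Longrightarrow> size (hd ss) < size (Node ys ss)"
  by (rule vtree_size_mem) simp


text \<open>star q t s is  t \<star>_q s = t \<succ> s + t \<prec> s + q (t \<bullet> s)  on basis trees, including the
  conventions for the leaf |, in particular  | \<star>_q | = |.\<close>
function star :: "'k::comm_ring_1 \<Rightarrow> 'y vtree \<Rightarrow> 'y vtree \<Rightarrow> ('y, 'k) lin" where
  "star q Leaf Leaf = Poly_Mapping.single Leaf 1"
| "star q Leaf (Node ys ss) = Poly_Mapping.single (Node ys ss) 1"
| "star q (Node xs ts) Leaf = Poly_Mapping.single (Node xs ts) 1"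
| "star q (Node xs ts) (Node ys ss) =
     (if ts = [] \<or> ss = [] then 0 else
        graft (\<lambda>u. Node xs (butlast ts @ [u])) (star q (last ts) (Node ys ss))
      + graft (\<lambda>u. Node ys (u # tl ss)) (star q (Node xs ts) (hd ss))
      + smul q (graft (\<lambda>u. Node (xs @ ys) (butlast ts @ [u] @ tl ss)) (star q (last ts) (hd ss))))"
  by pat_completeness auto
termination
  by (relation "measure (\<lambda>(q, t, s). size t + size s)")
     (auto simp: vtree_size_last vtree_size_hd intro: vtree_aux0 vtree_aux1 vtree_aux2)

text \<open>The three operations on basis trees (with the leaf conventions; on a pair of leaves
  they are set to 0, which never matters since only their combination star is used there).\<close>
fun prec_t :: "'k::comm_ring_1 \<Rightarrow> 'y vtree \<Rightarrow> 'y vtree \<Rightarrow> ('y, 'k) lin" where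
  "prec_t q Leaf s = 0"
| "prec_t q (Node xs ts) Leaf = Poly_Mapping.single (Node xs ts) 1"
| "prec_t q (Node xs ts) (Node ys ss) =
     graft (\<lambda>u. Node xs (butlast ts @ [u])) (star q (last ts) (Node ys ss))"

fun succ_t :: "'k::comm_ring_1 \<Rightarrow> 'y vtree \<Rightarrow> 'y vtree \<Rightarrow> ('y, 'k) lin" where
  "succ_t q t Leaf = 0"
| "succ_t q Leaf (Node ys ss) = Poly_Mapping.single (Node ys ss) 1"
| "succ_t q (Node xs ts) (Node ys ss) =
     graft (\<lambda>u. Node ys (u # tl ss)) (star q (Node xs ts) (hd ss))"

fun bul_t :: "'k::comm_ring_1 \<Rightarrow> 'y vtree \<Rightarrow> 'y vtree \<Rightarrow> ('y, 'k) lin" where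
  "bul_t q Leaf s = 0"
| "bul_t q t Leaf = 0"
| "bul_t q (Node xs ts) (Node ys ss) =
     graft (\<lambda>u. Node (xs @ ys) (butlast ts @ [u] @ tl ss)) (star q (last ts) (hd ss))"

definition DT_prec :: "'k::comm_ring_1 \<Rightarrow> ('y, 'k) lin \<Rightarrow> ('y, 'k) lin \<Rightarrow> ('y, 'k) lin" where
  "DT_prec q = bilin_ext (prec_t q)"
definition DT_succ :: "'k::comm_ring_1 \<Rightarrow> ('y, 'k) lin \<Rightarrow> ('y, 'k) lin \<Rightarrow> ('y, 'k) lin" where
  "DT_succ q = bilin_ext (succ_t q)"
definition DT_bul :: "'k::comm_ring_1 \<Rightarrow> ('y, 'k) lin \<Rightarrow> ('y, 'k) lin \<Rightarrow> ('y, 'k) lin" where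
  "DT_bul q = bilin_ext (bul_t q)"

definition DT :: "'y set \<Rightarrow> ('y, 'k::comm_ring_1) lin set" where
  "DT Y = {p. \<forall>t\<in>Poly_Mapping.keys p. t \<noteq> Leaf \<and> wf_vtree Y t}"

section \<open>The derivation d_X on DT(Delta X), Delta X = X \<times> N\<close>

fun nent :: "'y vtree \<Rightarrow> nat" where
  "nent Leaf = 0"
| "nent (Node ys ts) = length ys + sum_list (map nent ts)"

text \<open>Enumerate the decoration entries in preorder (root decoration first, then the subtrees
  from left to right) starting at offset o; shift_tree S off t replaces each entry
  x^(r) whose index lies in S by x^(r+1).\<close>
fun shift_tree :: "nat set \<Rightarrow> nat \<Rightarrow> ('x \<times> nat) vtree \<Rightarrow> ('x \<times> nat) vtree"
and shift_forest :: "nat set \<Rightarrow> nat \<Rightarrow> ('x \<times> nat) vtree list \<Rightarrow> ('x \<times> nat) vtree list" where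
  "shift_tree S off Leaf = Leaf"
| "shift_tree S off (Node ys ts) =
     Node (map (\<lambda>i. if off + i \<in> S then (fst (ys ! i), Suc (snd (ys ! i))) else ys ! i) [0..<length ys])
          (shift_forest S (off + length ys) ts)"
| "shift_forest S off [] = []"
| "shift_forest S off (t # ts) = shift_tree S off t # shift_forest S (off + nent t) ts"

definition d_tree :: "'k::comm_ring_1 \<Rightarrow> ('x \<times> nat) vtree \<Rightarrow> ('x \<times> nat, 'k) lin" where
  "d_tree lam t = (\<Sum>S\<in>Pow {0..<nent t} - {{}}.
       smul (lam ^ (card S - 1)) (Poly_Mapping.single (shift_tree S 0 t) 1))"

definition d_X :: "'k::comm_ring_1 \<Rightarrow> ('x \<times> nat, 'k) lin \<Rightarrow> ('x \<times> nat, 'k) lin" where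
  "d_X lam = lin_ext (d_tree lam)"

definition q_tridendriform ::
  "('k \<Rightarrow> 'a \<Rightarrow> 'a) \<Rightarrow> 'a::ab_group_add set \<Rightarrow> ('a \<Rightarrow> 'a \<Rightarrow> 'a) \<Rightarrow> ('a \<Rightarrow> 'a \<Rightarrow> 'a)
     \<Rightarrow> ('a \<Rightarrow> 'a \<Rightarrow> 'a) \<Rightarrow> 'k \<Rightarrow> bool" where
  "q_tridendriform sm T pr su bu q \<longleftrightarrow>
     0 \<in> T \<and> (\<forall>a\<in>T. \<forall>b\<in>T. a + b \<in> T) \<and> (\<forall>c. \<forall>a\<in>T. sm c a \<in> T) \<and>
     (\<forall>op\<in>{pr, su, bu}.
        (\<forall>a\<in>T. \<forall>b\<in>T. op a b \<in> T) \<and>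
        (\<forall>a\<in>T. \<forall>a'\<in>T. \<forall>b\<in>T. op (a + a') b = op a b + op a' b \<and> op b (a + a') = op b a + op b a') \<and>
        (\<forall>c. \<forall>a\<in>T. \<forall>b\<in>T. op (sm c a) b = sm c (op a b) \<and> op a (sm c b) = sm c (op a b))) \<and>
     (let st = (\<lambda>a b. pr a b + su a b + sm q (bu a b)) in
      \<forall>a\<in>T. \<forall>b\<in>T. \<forall>c\<in>T.
        pr (pr a b) c = pr a (st b c) \<and>
        pr (su a b) c = su a (pr b c) \<and>
        su (st a b) c = su a (su b c) \<and>
        bu (su a b) c = su a (bu b c) \<and>
        bu (pr a b) c = bu a (su b c) \<and>
        pr (bu a b) c = bu a (pr b c) \<and>
        bu (bu a b) c = bu a (bu b c))"

definition differential_q_tridendriform ::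
  "('k \<Rightarrow> 'a \<Rightarrow> 'a) \<Rightarrow> 'a::ab_group_add set \<Rightarrow> ('a \<Rightarrow> 'a \<Rightarrow> 'a) \<Rightarrow> ('a \<Rightarrow> 'a \<Rightarrow> 'a)
     \<Rightarrow> ('a \<Rightarrow> 'a \<Rightarrow> 'a) \<Rightarrow> ('a \<Rightarrow> 'a) \<Rightarrow> 'k \<Rightarrow> 'k \<Rightarrow> bool" where
  "differential_q_tridendriform sm T pr su bu d q lam \<longleftrightarrow>
     q_tridendriform sm T pr su bu q \<and>
     (\<forall>a\<in>T. d a \<in> T) \<and>
     (\<forall>a\<in>T. \<forall>b\<in>T. d (a + b) = d a + d b) \<and>
     (\<forall>c. \<forall>a\<in>T. d (sm c a) = sm c (d a)) \<and>
     (\<forall>op\<in>{pr, su, bu}. \<forall>a\<in>T. \<forall>b\<in>T.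
        d (op a b) = op (d a) b + op a (d b) + sm lam (op (d a) (d b)))"

end

(*
  All three operations are defined through star (the operation star_q with the leaf
  conventions).  On trees, each q-tridendriform identity either regrafts both sides at one
  vertex, where it reduces to associativity of star on smaller trees, or grafts at two
  different vertices, where the two graftings commute.  So associativity of star and the
  seven identities are proved together by induction on size and then extended bilinearly.

  For the derivation, tag each decoration entry of a and b by its position in the
  juxtaposition a b.  The operations only move entries around and commute with relabelling
  them, so d_X of a product a op b is a sum over sets S of tags.  Splitting S into its
  part in a and its part in b, the weight lam^(|S| - 1) factors exactly as the Leibniz rule of
  weight lam requires.
*)
theory Submission
  imports Defs "HOL-Library.Multiset"
begin

subsection \<open>Linear extension\<close>

lemma lookup_smul [simp]: "Poly_Mapping.lookup (smul c p) t = c * Poly_Mapping.lookup p t"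
  unfolding smul_def by transfer (simp add: when_def)

lemma smul_add_right: "smul c (p + r) = smul c p + smul c r"
  by (rule poly_mapping_eqI) (simp add: lookup_add algebra_simps)

lemma smul_add_left: "smul (c + d) p = smul c p + smul d p"
  by (rule poly_mapping_eqI) (simp add: lookup_add algebra_simps)

lemma smul_smul [simp]: "smul c (smul d p) = smul (c * d) p"
  by (rule poly_mapping_eqI) (simp add: algebra_simps)

lemma smul_zero_right [simp]: "smul c 0 = 0"
  by (rule poly_mapping_eqI) simp

lemma smul_zero_left [simp]: "smul 0 p = 0"
  by (rule poly_mapping_eqI) simp

lemma smul_one [simp]: "smul 1 p = p"
  by (rule poly_mapping_eqI) simp

lemma smul_sum: "smul c (sum f A) = (\<Sum>a\<in>A. smul c (f a))"
  by (induction A rule: infinite_finite_induct) (auto simp: smul_add_right)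

lemma keys_smul_subset: "Poly_Mapping.keys (smul c p) \<subseteq> Poly_Mapping.keys p"
  by (auto simp: in_keys_iff)

lemma lin_ext_eq_sum_superset:
  assumes "finite A" "Poly_Mapping.keys p \<subseteq> A"
  shows "lin_ext f p = (\<Sum>t\<in>A. smul (Poly_Mapping.lookup p t) (f t))"
  unfolding lin_ext_def using assms
  by (intro sum.mono_neutral_left) (auto simp: in_keys_iff)

lemma lin_ext_add: "lin_ext f (p + r) = lin_ext f p + lin_ext f r"
proof -
  let ?A = "Poly_Mapping.keys p \<union> Poly_Mapping.keys r"
  have "lin_ext f (p + r) = (\<Sum>t\<in>?A. smul (Poly_Mapping.lookup (p + r) t) (f t))"
    by (rule lin_ext_eq_sum_superset) (auto simp: keys_add)
  also have "\<dots> = (\<Sum>t\<in>?A. smul (Poly_Mapping.lookup p t) (f t))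
                + (\<Sum>t\<in>?A. smul (Poly_Mapping.lookup r t) (f t))"
    by (simp add: lookup_add smul_add_left sum.distrib)
  also have "\<dots> = lin_ext f p + lin_ext f r"
    by (subst (1 2) lin_ext_eq_sum_superset[where A = ?A]) auto
  finally show ?thesis .
qed

lemma lin_ext_zero [simp]: "lin_ext f 0 = 0"
  by (simp add: lin_ext_def)

lemma lin_ext_smul: "lin_ext f (smul c p) = smul c (lin_ext f p)"
proof -
  have "lin_ext f (smul c p)
      = (\<Sum>t\<in>Poly_Mapping.keys p. smul (Poly_Mapping.lookup (smul c p) t) (f t))"
    by (rule lin_ext_eq_sum_superset) (auto simp: keys_smul_subset[THEN subsetD])
  then show ?thesis by (simp add: lin_ext_def smul_sum)
qed

lemma lin_ext_sum: "lin_ext f (sum g A) = (\<Sum>a\<in>A. lin_ext f (g a))"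
  by (induction A rule: infinite_finite_induct) (auto simp: lin_ext_add)

lemma lin_ext_single [simp]: "lin_ext f (Poly_Mapping.single t c) = smul c (f t)"
  by (cases "c = 0") (auto simp: lin_ext_def)

lemma lin_ext_cong:
  "(\<And>t. t \<in> Poly_Mapping.keys p \<Longrightarrow> f t = g t) \<Longrightarrow> lin_ext f p = lin_ext g p"
  by (simp add: lin_ext_def)

lemma lin_ext_add_fun: "lin_ext (\<lambda>t. f t + g t) p = lin_ext f p + lin_ext g p"
  by (simp add: lin_ext_def smul_add_right sum.distrib)

lemma lin_ext_smul_fun: "lin_ext (\<lambda>t. smul c (f t)) p = smul c (lin_ext f p)"
  by (simp add: lin_ext_def smul_sum mult.commute)

lemma lin_ext_zero_fun [simp]: "lin_ext (\<lambda>t. 0) p = 0"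
  by (simp add: lin_ext_def)

lemma lin_ext_sum_fun: "lin_ext (\<lambda>t. \<Sum>i\<in>A. f i t) p = (\<Sum>i\<in>A. lin_ext (f i) p)"
  by (induction A rule: infinite_finite_induct) (simp_all add: lin_ext_add_fun)

lemma keys_lin_ext_subset:
  "Poly_Mapping.keys (lin_ext f p) \<subseteq> (\<Union>t\<in>Poly_Mapping.keys p. Poly_Mapping.keys (f t))"
  unfolding lin_ext_def using keys_sum keys_smul_subset by fastforce

lemma lin_ext_single_id: "lin_ext (\<lambda>t. Poly_Mapping.single t 1) p = p"
proof (rule poly_mapping_eqI)
  fix s
  have "finite I \<Longrightarrow> Poly_Mapping.lookup (\<Sum>t\<in>I. smul (Poly_Mapping.lookup p t) (Poly_Mapping.single t 1)) s
          = (if s \<in> I then Poly_Mapping.lookup p s else 0)" for I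
    by (induction I rule: finite_induct) (auto simp: lookup_single lookup_add when_def)
  then show "Poly_Mapping.lookup (lin_ext (\<lambda>t. Poly_Mapping.single t 1) p) s = Poly_Mapping.lookup p s"
    by (simp add: lin_ext_def in_keys_iff)
qed

lemma lin_ext_lin_ext: "lin_ext F (lin_ext G p) = lin_ext (\<lambda>t. lin_ext F (G t)) p"
  by (simp only: lin_ext_def[of G p] lin_ext_sum lin_ext_smul) (simp only: lin_ext_def)

lemma lin_ext_commute:
  "lin_ext (\<lambda>u. lin_ext (\<lambda>w. K u w) Q) P = lin_ext (\<lambda>w. lin_ext (\<lambda>u. K u w) P) Q"
  by (simp add: lin_ext_def smul_sum sum.swap[of _ "Poly_Mapping.keys Q"] mult.commute)

lemma bilin_ext_eq_lin_ext: "bilin_ext f p r = lin_ext (\<lambda>t. lin_ext (\<lambda>s. f t s) r) p"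
  by (simp add: bilin_ext_def lin_ext_def smul_sum)

lemma bilin_ext_add_left: "bilin_ext f (p + p') r = bilin_ext f p r + bilin_ext f p' r"
  by (simp add: bilin_ext_eq_lin_ext lin_ext_add)

lemma bilin_ext_add_right: "bilin_ext f p (r + r') = bilin_ext f p r + bilin_ext f p r'"
  by (simp add: bilin_ext_eq_lin_ext lin_ext_add lin_ext_add_fun)

lemma bilin_ext_smul_left: "bilin_ext f (smul c p) r = smul c (bilin_ext f p r)"
  by (simp add: bilin_ext_eq_lin_ext lin_ext_smul)

lemma bilin_ext_smul_right: "bilin_ext f p (smul c r) = smul c (bilin_ext f p r)"
  by (simp add: bilin_ext_eq_lin_ext lin_ext_smul lin_ext_smul_fun)

text \<open>Unlike graft, lin_map may change the type of the basis.\<close>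
definition lin_map :: "('a \<Rightarrow> 'b) \<Rightarrow> ('a \<Rightarrow>\<^sub>0 'k::comm_ring_1) \<Rightarrow> ('b \<Rightarrow>\<^sub>0 'k)" where
  "lin_map g = lin_ext (\<lambda>t. Poly_Mapping.single (g t) 1)"

lemma graft_eq_lin_map [simp]: "graft = lin_map"
  by (intro ext) (simp add: graft_def lin_map_def)

lemma lin_ext_lin_map [simp]: "lin_ext F (lin_map g p) = lin_ext (\<lambda>u. F (g u)) p"
  by (simp add: lin_map_def lin_ext_lin_ext)

lemma lin_map_lin_ext: "lin_map g (lin_ext F p) = lin_ext (\<lambda>u. lin_map g (F u)) p"
  by (simp add: lin_map_def lin_ext_lin_ext)

lemma lin_map_lin_map [simp]: "lin_map h (lin_map g p) = lin_map (h \<circ> g) p"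
  by (simp add: lin_map_def lin_ext_lin_ext)

lemma lin_map_add [simp]: "lin_map g (p + r) = lin_map g p + lin_map g r"
  by (simp add: lin_map_def lin_ext_add)

lemma lin_map_smul [simp]: "lin_map g (smul c p) = smul c (lin_map g p)"
  by (simp add: lin_map_def lin_ext_smul)

lemma lin_map_zero [simp]: "lin_map g 0 = 0"
  by (simp add: lin_map_def)

lemma lin_map_single [simp]: "lin_map g (Poly_Mapping.single t 1) = Poly_Mapping.single (g t) 1"
  by (simp add: lin_map_def)

lemma lin_map_commute:
  "lin_ext (\<lambda>u. lin_map (\<lambda>w. f u w) Q) P = lin_ext (\<lambda>w. lin_map (\<lambda>u. f u w) P) Q"
  unfolding lin_map_def by (rule lin_ext_commute)

lemma keys_lin_map_subset: "Poly_Mapping.keys (lin_map g p) \<subseteq> g ` Poly_Mapping.keys p"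
  using keys_lin_ext_subset[of "\<lambda>t. Poly_Mapping.single (g t) 1" p] by (auto simp: lin_map_def)

subsection \<open>The q-tridendriform identities on trees\<close>

lemma star_Leaf_left [simp]: "star q Leaf v = Poly_Mapping.single v 1"
  by (cases v) auto

lemma star_Leaf_right [simp]: "star q u Leaf = Poly_Mapping.single u 1"
  by (cases u) auto

lemma prec_t_Node:
  "ts \<noteq> [] \<Longrightarrow> prec_t q (Node xs ts) v = graft (\<lambda>u. Node xs (butlast ts @ [u])) (star q (last ts) v)"
  by (cases v) auto

lemma succ_t_Node:
  "ss \<noteq> [] \<Longrightarrow> succ_t q u (Node ys ss) = graft (\<lambda>w. Node ys (w # tl ss)) (star q u (hd ss))"
  by (cases u) auto

definition star_t :: "'k::comm_ring_1 \<Rightarrow> 'y vtree \<Rightarrow> 'y vtree \<Rightarrow> ('y, 'k) lin" where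
  "star_t q a b = prec_t q a b + succ_t q a b + smul q (bul_t q a b)"

lemma star_eq_star_t:
  "wf_vtree Y a \<Longrightarrow> wf_vtree Y b \<Longrightarrow> a \<noteq> Leaf \<Longrightarrow> b \<noteq> Leaf \<Longrightarrow> star q a b = star_t q a b"
  by (cases a; cases b) (auto simp: star_t_def)

text \<open>Naming the three operations lets a statement about all of them be proved once and
  used at several tree types.\<close>
datatype tri_op = Prec | Succ | Bul

fun tri_op_t :: "tri_op \<Rightarrow> 'k::comm_ring_1 \<Rightarrow> 'y vtree \<Rightarrow> 'y vtree \<Rightarrow> ('y, 'k) lin" where
  "tri_op_t Prec = prec_t"
| "tri_op_t Succ = succ_t"
| "tri_op_t Bul = bul_t"

definition star_assoc :: "'k::comm_ring_1 \<Rightarrow> 'y vtree \<Rightarrow> 'y vtree \<Rightarrow> 'y vtree \<Rightarrow> bool" where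
  "star_assoc q a b c \<longleftrightarrow>
     lin_ext (\<lambda>u. star q u c) (star q a b) = lin_ext (\<lambda>v. star q a v) (star q b c)"

lemma star_assoc_Leaf: "star_assoc q Leaf b c" "star_assoc q a Leaf c" "star_assoc q a b Leaf"
  by (simp_all add: star_assoc_def lin_ext_single_id)

lemma tridendriform_identities_Node:
  fixes q :: "'k::comm_ring_1" and xs ys zs :: "'y list"
    and ts ss rs :: "'y vtree list" and la hb hc :: "'y vtree"
  defines "a \<equiv> Node xs (ts @ [la])" and "b \<equiv> Node ys (hb # ss)" and "c \<equiv> Node zs (hc # rs)"
  assumes "star_assoc q la b c" "star_assoc q a hb c" "star_assoc q a b hc"
    "star_assoc q a hb hc" "star_assoc q la b hc" "star_assoc q la hb c" "star_assoc q la hb hc"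
  shows "lin_ext (\<lambda>u. prec_t q u c) (prec_t q a b) = lin_ext (\<lambda>v. prec_t q a v) (star q b c)"
    and "lin_ext (\<lambda>u. prec_t q u c) (succ_t q a b) = lin_ext (\<lambda>v. succ_t q a v) (prec_t q b c)"
    and "lin_ext (\<lambda>u. succ_t q u c) (star q a b) = lin_ext (\<lambda>v. succ_t q a v) (succ_t q b c)"
    and "lin_ext (\<lambda>u. bul_t q u c) (succ_t q a b) = lin_ext (\<lambda>v. succ_t q a v) (bul_t q b c)"
    and "lin_ext (\<lambda>u. bul_t q u c) (prec_t q a b) = lin_ext (\<lambda>v. bul_t q a v) (succ_t q b c)"
    and "lin_ext (\<lambda>u. prec_t q u c) (bul_t q a b) = lin_ext (\<lambda>v. bul_t q a v) (prec_t q b c)"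
    and "lin_ext (\<lambda>u. bul_t q u c) (bul_t q a b) = lin_ext (\<lambda>v. bul_t q a v) (bul_t q b c)"
proof -
  note defs = a_def b_def c_def prec_t_Node succ_t_Node lin_map_lin_ext[symmetric]
  note assoc = assms(4-10)[unfolded star_assoc_def]
  show "lin_ext (\<lambda>u. prec_t q u c) (prec_t q a b) = lin_ext (\<lambda>v. prec_t q a v) (star q b c)"
    using assoc(1) by (simp add: defs)
  show "lin_ext (\<lambda>u. succ_t q u c) (star q a b) = lin_ext (\<lambda>v. succ_t q a v) (succ_t q b c)"
    using assoc(3) by (simp add: defs)
  show "lin_ext (\<lambda>u. bul_t q u c) (prec_t q a b) = lin_ext (\<lambda>v. bul_t q a v) (succ_t q b c)"
    using assoc(5) by (simp add: defs)
  show "lin_ext (\<lambda>u. prec_t q u c) (succ_t q a b) = lin_ext (\<lambda>v. succ_t q a v) (prec_t q b c)"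
    using assoc(2) by (cases ss rule: rev_exhaust) (simp_all add: defs, rule lin_map_commute)
  show "lin_ext (\<lambda>u. bul_t q u c) (succ_t q a b) = lin_ext (\<lambda>v. succ_t q a v) (bul_t q b c)"
    using assoc(4) by (cases ss rule: rev_exhaust) (simp_all add: defs, rule lin_map_commute)
  show "lin_ext (\<lambda>u. prec_t q u c) (bul_t q a b) = lin_ext (\<lambda>v. bul_t q a v) (prec_t q b c)"
    using assoc(6) by (cases ss rule: rev_exhaust)
      (simp_all add: defs butlast_append, rule lin_map_commute)
  show "lin_ext (\<lambda>u. bul_t q u c) (bul_t q a b) = lin_ext (\<lambda>v. bul_t q a v) (bul_t q b c)"
    using assoc(7) by (cases ss rule: rev_exhaust)
      (simp_all add: defs butlast_append, rule lin_map_commute)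
qed

lemma wf_vtree_replace_last:
  "wf_vtree Y (Node xs ts) \<Longrightarrow> wf_vtree Y u \<Longrightarrow> wf_vtree Y (Node xs (butlast ts @ [u]))"
  by (auto dest: in_set_butlastD)

lemma wf_vtree_replace_hd:
  "wf_vtree Y (Node ys ss) \<Longrightarrow> wf_vtree Y u \<Longrightarrow> wf_vtree Y (Node ys (u # tl ss))"
  by (cases ss) auto

lemma wf_vtree_merge:
  "wf_vtree Y (Node xs ts) \<Longrightarrow> wf_vtree Y (Node ys ss) \<Longrightarrow> wf_vtree Y u \<Longrightarrow>
   wf_vtree Y (Node (xs @ ys) (butlast ts @ u # tl ss))"
  by (cases ss) (auto dest: in_set_butlastD)

lemma keys_lin_map_wf:
  assumes "Poly_Mapping.keys P \<subseteq> {u. wf_vtree Y u}"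
    and "\<And>u. wf_vtree Y u \<Longrightarrow> wf_vtree Y (g u) \<and> g u \<noteq> Leaf"
  shows "Poly_Mapping.keys (lin_map g P) \<subseteq> {t. wf_vtree Y t \<and> t \<noteq> Leaf}"
proof
  fix t assume "t \<in> Poly_Mapping.keys (lin_map g P)"
  then obtain u where "u \<in> Poly_Mapping.keys P" "t = g u"
    using keys_lin_map_subset[of g P] by blast
  with assms show "t \<in> {t. wf_vtree Y t \<and> t \<noteq> Leaf}"
    by auto
qed

lemma keys_add_smul_subset:
  "Poly_Mapping.keys (A + B + smul c C)
     \<subseteq> Poly_Mapping.keys A \<union> Poly_Mapping.keys B \<union> Poly_Mapping.keys C"
  using keys_add[of "A + B" "smul c C"] keys_add[of A B] keys_smul_subset[of c C] by auto

lemma keys_star_subset: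
  "wf_vtree Y a \<Longrightarrow> wf_vtree Y b \<Longrightarrow>
   Poly_Mapping.keys (star q a b) \<subseteq> {t. wf_vtree Y t \<and> (t = Leaf \<longrightarrow> a = Leaf \<and> b = Leaf)}"
proof (induction q a b rule: star.induct)
  case (4 q xs ts ys ss)
  let ?W = "{t. wf_vtree Y t \<and> t \<noteq> Leaf}"
  from "4.prems" have ne: "ts \<noteq> []" "ss \<noteq> []"
    by auto
  with "4.prems" have wf: "wf_vtree Y (last ts)" "wf_vtree Y (hd ss)"
    by simp_all
  have ih: "Poly_Mapping.keys (star q (last ts) (Node ys ss)) \<subseteq> {u. wf_vtree Y u}"
    "Poly_Mapping.keys (star q (Node xs ts) (hd ss)) \<subseteq> {u. wf_vtree Y u}"
    "Poly_Mapping.keys (star q (last ts) (hd ss)) \<subseteq> {u. wf_vtree Y u}"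
    using "4.IH"(1)[OF _ wf(1) "4.prems"(2)] "4.IH"(2)[OF _ "4.prems"(1) wf(2)]
      "4.IH"(3)[OF _ wf] ne by auto
  have "Poly_Mapping.keys (lin_map (\<lambda>u. Node xs (butlast ts @ [u])) (star q (last ts) (Node ys ss)))
      \<subseteq> ?W"
    by (rule keys_lin_map_wf[OF ih(1)])
      (simp del: wf_vtree.simps add: wf_vtree_replace_last[OF "4.prems"(1)])
  moreover have "Poly_Mapping.keys (lin_map (\<lambda>u. Node ys (u # tl ss)) (star q (Node xs ts) (hd ss)))
      \<subseteq> ?W"
    by (rule keys_lin_map_wf[OF ih(2)])
      (simp del: wf_vtree.simps add: wf_vtree_replace_hd[OF "4.prems"(2)])
  moreover have "Poly_Mapping.keys (lin_map (\<lambda>u. Node (xs @ ys) (butlast ts @ [u] @ tl ss))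
      (star q (last ts) (hd ss))) \<subseteq> ?W"
    by (rule keys_lin_map_wf[OF ih(3)])
      (simp del: wf_vtree.simps add: wf_vtree_merge[OF "4.prems"])
  ultimately have "Poly_Mapping.keys (star q (Node xs ts) (Node ys ss)) \<subseteq> ?W"
    using ne by (simp del: wf_vtree.simps) (meson Un_least order_trans keys_add_smul_subset)
  then show ?case
    by simp
qed auto

lemma keys_tri_op_t_subset:
  assumes wf: "wf_vtree Y a" "wf_vtree Y b"
  shows "Poly_Mapping.keys (tri_op_t opr q a b) \<subseteq> {t. wf_vtree Y t \<and> t \<noteq> Leaf}"
proof (cases "a = Leaf \<or> b = Leaf")
  case True
  with wf show ?thesis
    by (cases opr; cases a; cases b) auto
next
  case False
  then obtain xs ts ys ss where ab: "a = Node xs ts" "b = Node ys ss"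
    by (meson vtree.exhaust)
  with wf have ne: "ts \<noteq> []" "ss \<noteq> []"
    by auto
  with wf ab have wf_last: "wf_vtree Y (last ts)" and wf_hd: "wf_vtree Y (hd ss)"
    by simp_all
  have star: "Poly_Mapping.keys (star q u v) \<subseteq> {t. wf_vtree Y t}"
    if "wf_vtree Y u" "wf_vtree Y v" for u v
    using keys_star_subset[OF that, of q] by auto
  show ?thesis
  proof (cases opr)
    case Prec
    have "Poly_Mapping.keys (lin_map (\<lambda>u. Node xs (butlast ts @ [u])) (star q (last ts) b))
        \<subseteq> {t. wf_vtree Y t \<and> t \<noteq> Leaf}"
      by (rule keys_lin_map_wf[OF star[OF wf_last wf(2)]])
        (simp del: wf_vtree.simps add: wf_vtree_replace_last[OF wf(1)[unfolded ab]])
    with Prec ab ne show ?thesis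
      by simp
  next
    case Succ
    have "Poly_Mapping.keys (lin_map (\<lambda>u. Node ys (u # tl ss)) (star q a (hd ss)))
        \<subseteq> {t. wf_vtree Y t \<and> t \<noteq> Leaf}"
      by (rule keys_lin_map_wf[OF star[OF wf(1) wf_hd]])
        (simp del: wf_vtree.simps add: wf_vtree_replace_hd[OF wf(2)[unfolded ab]])
    with Succ ab ne show ?thesis
      by simp
  next
    case Bul
    have "Poly_Mapping.keys (lin_map (\<lambda>u. Node (xs @ ys) (butlast ts @ [u] @ tl ss))
        (star q (last ts) (hd ss))) \<subseteq> {t. wf_vtree Y t \<and> t \<noteq> Leaf}"
      by (rule keys_lin_map_wf[OF star[OF wf_last wf_hd]])
        (simp del: wf_vtree.simps add: wf_vtree_merge[OF wf[unfolded ab]])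
    with Bul ab ne show ?thesis
      by simp
  qed
qed

lemma wf_vtree_Node_lastE:
  assumes "wf_vtree Y a" "a \<noteq> Leaf"
  obtains xs ts l where "a = Node xs (ts @ [l])" "wf_vtree Y l" "size l < size a"
proof -
  obtain xs ts where a: "a = Node xs ts"
    using assms(2) by (cases a) auto
  with assms(1) have "ts \<noteq> []"
    by auto
  then obtain ts' l where "ts = ts' @ [l]"
    by (metis rev_exhaust)
  with that a assms(1) vtree_size_mem[of l ts xs] show thesis
    by simp
qed

lemma wf_vtree_Node_hdE:
  assumes "wf_vtree Y a" "a \<noteq> Leaf"
  obtains ys h ts where "a = Node ys (h # ts)" "wf_vtree Y h" "size h < size a"
proof -
  obtain ys ts where a: "a = Node ys ts"
    using assms(2) by (cases a) auto
  with assms(1) have "ts \<noteq> []"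
    by auto
  then obtain h ts' where "ts = h # ts'"
    by (metis list.exhaust)
  with that a assms(1) vtree_size_mem[of h ts ys] show thesis
    by simp
qed

text \<open>Associativity of star is the sum of the seven identities, which only need it for
  smaller triples.\<close>
lemma star_assoc_wf:
  "wf_vtree Y a \<Longrightarrow> wf_vtree Y b \<Longrightarrow> wf_vtree Y c \<Longrightarrow> star_assoc q a b c"
proof (induction "size a + size b + size c" arbitrary: a b c rule: less_induct)
  case less
  show ?case
  proof (cases "a = Leaf \<or> b = Leaf \<or> c = Leaf")
    case True
    then show ?thesis
      using star_assoc_Leaf by blast
  next
    case False
    with less.prems obtain xs ba la
      where a: "a = Node xs (ba @ [la])" "wf_vtree Y la" "size la < size a"
      by (meson wf_vtree_Node_lastE)
    from False less.prems obtain ys hb sb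
      where b: "b = Node ys (hb # sb)" "wf_vtree Y hb" "size hb < size b"
      by (meson wf_vtree_Node_hdE)
    from False less.prems obtain zs hc rc
      where c: "c = Node zs (hc # rc)" "wf_vtree Y hc" "size hc < size c"
      by (meson wf_vtree_Node_hdE)
    have assoc: "star_assoc q la b c" "star_assoc q a hb c" "star_assoc q a b hc"
      "star_assoc q a hb hc" "star_assoc q la b hc" "star_assoc q la hb c" "star_assoc q la hb hc"
      using less.hyps less.prems a b c by simp_all
    note identities =
      tridendriform_identities_Node[OF assoc[unfolded a(1) b(1) c(1)], folded a(1) b(1) c(1)]
    have star_ab: "star q a b = star_t q a b" and star_bc: "star q b c = star_t q b c"
      using star_eq_star_t less.prems False by blast+
    have "lin_ext (\<lambda>u. star q u c) (star q a b) = lin_ext (\<lambda>u. star_t q u c) (star_t q a b)"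
      using keys_star_subset[of Y a b q] less.prems False star_eq_star_t[of Y _ c q]
      by (auto simp: star_ab intro: lin_ext_cong)
    moreover have "lin_ext (\<lambda>v. star q a v) (star q b c) = lin_ext (\<lambda>v. star_t q a v) (star_t q b c)"
      using keys_star_subset[of Y b c q] less.prems False star_eq_star_t[of Y a _ q]
      by (auto simp: star_bc intro: lin_ext_cong)
    ultimately show ?thesis
      using identities unfolding star_assoc_def star_ab star_bc
      by (simp add: star_t_def lin_ext_add lin_ext_smul lin_ext_add_fun lin_ext_smul_fun
          smul_add_right add_ac)
  qed
qed

lemma tridendriform_identities:
  assumes wf: "wf_vtree Y a" "wf_vtree Y b" "wf_vtree Y c"
    and ne: "a \<noteq> Leaf" "b \<noteq> Leaf" "c \<noteq> Leaf"
  shows "lin_ext (\<lambda>u. prec_t q u c) (prec_t q a b) = lin_ext (\<lambda>v. prec_t q a v) (star_t q b c)"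
    and "lin_ext (\<lambda>u. prec_t q u c) (succ_t q a b) = lin_ext (\<lambda>v. succ_t q a v) (prec_t q b c)"
    and "lin_ext (\<lambda>u. succ_t q u c) (star_t q a b) = lin_ext (\<lambda>v. succ_t q a v) (succ_t q b c)"
    and "lin_ext (\<lambda>u. bul_t q u c) (succ_t q a b) = lin_ext (\<lambda>v. succ_t q a v) (bul_t q b c)"
    and "lin_ext (\<lambda>u. bul_t q u c) (prec_t q a b) = lin_ext (\<lambda>v. bul_t q a v) (succ_t q b c)"
    and "lin_ext (\<lambda>u. prec_t q u c) (bul_t q a b) = lin_ext (\<lambda>v. bul_t q a v) (prec_t q b c)"
    and "lin_ext (\<lambda>u. bul_t q u c) (bul_t q a b) = lin_ext (\<lambda>v. bul_t q a v) (bul_t q b c)"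
proof -
  obtain xs ba la where a: "a = Node xs (ba @ [la])" "wf_vtree Y la"
    using wf ne by (meson wf_vtree_Node_lastE)
  obtain ys hb sb where b: "b = Node ys (hb # sb)" "wf_vtree Y hb"
    using wf ne by (meson wf_vtree_Node_hdE)
  obtain zs hc rc where c: "c = Node zs (hc # rc)" "wf_vtree Y hc"
    using wf ne by (meson wf_vtree_Node_hdE)
  have "star_assoc q la b c" "star_assoc q a hb c" "star_assoc q a b hc"
    "star_assoc q a hb hc" "star_assoc q la b hc" "star_assoc q la hb c" "star_assoc q la hb hc"
    using wf a b c by (auto intro: star_assoc_wf)
  note identities =
    tridendriform_identities_Node[OF this[unfolded a(1) b(1) c(1)], folded a(1) b(1) c(1)]
  have "star q a b = star_t q a b" "star q b c = star_t q b c"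
    using star_eq_star_t wf ne by blast+
  with identities show
    "lin_ext (\<lambda>u. prec_t q u c) (prec_t q a b) = lin_ext (\<lambda>v. prec_t q a v) (star_t q b c)"
    "lin_ext (\<lambda>u. prec_t q u c) (succ_t q a b) = lin_ext (\<lambda>v. succ_t q a v) (prec_t q b c)"
    "lin_ext (\<lambda>u. succ_t q u c) (star_t q a b) = lin_ext (\<lambda>v. succ_t q a v) (succ_t q b c)"
    "lin_ext (\<lambda>u. bul_t q u c) (succ_t q a b) = lin_ext (\<lambda>v. succ_t q a v) (bul_t q b c)"
    "lin_ext (\<lambda>u. bul_t q u c) (prec_t q a b) = lin_ext (\<lambda>v. bul_t q a v) (succ_t q b c)"
    "lin_ext (\<lambda>u. prec_t q u c) (bul_t q a b) = lin_ext (\<lambda>v. bul_t q a v) (prec_t q b c)"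
    "lin_ext (\<lambda>u. bul_t q u c) (bul_t q a b) = lin_ext (\<lambda>v. bul_t q a v) (bul_t q b c)"
    by simp_all
qed

lemma keys_DT: "P \<in> DT Y \<Longrightarrow> t \<in> Poly_Mapping.keys P \<Longrightarrow> wf_vtree Y t \<and> t \<noteq> Leaf"
  by (auto simp: DT_def)

lemma bilin_ext_assoc_DT:
  assumes "A \<in> DT Y" "B \<in> DT Y" "C \<in> DT Y"
    and "\<And>a b c. wf_vtree Y a \<Longrightarrow> wf_vtree Y b \<Longrightarrow> wf_vtree Y c \<Longrightarrow>
      a \<noteq> Leaf \<Longrightarrow> b \<noteq> Leaf \<Longrightarrow> c \<noteq> Leaf \<Longrightarrow>
      lin_ext (\<lambda>u. f u c) (g a b) = lin_ext (\<lambda>v. f' a v) (g' b c)"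
  shows "bilin_ext f (bilin_ext g A B) C = bilin_ext f' A (bilin_ext g' B C)"
proof -
  have "bilin_ext f (bilin_ext g A B) C
      = lin_ext (\<lambda>a. lin_ext (\<lambda>b. lin_ext (\<lambda>c. lin_ext (\<lambda>u. f u c) (g a b)) C) B) A"
    by (simp add: bilin_ext_eq_lin_ext lin_ext_lin_ext lin_ext_commute[of _ C])
  also have "\<dots> = lin_ext (\<lambda>a. lin_ext (\<lambda>b. lin_ext (\<lambda>c. lin_ext (\<lambda>v. f' a v) (g' b c)) C) B) A"
    using assms keys_DT by (intro lin_ext_cong) blast
  also have "\<dots> = bilin_ext f' A (bilin_ext g' B C)"
    by (simp add: bilin_ext_eq_lin_ext lin_ext_lin_ext)
  finally show ?thesis .
qed

lemma bilin_ext_mem_DT: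
  assumes "\<And>a b. wf_vtree Y a \<Longrightarrow> wf_vtree Y b \<Longrightarrow>
      Poly_Mapping.keys (f a b) \<subseteq> {t. wf_vtree Y t \<and> t \<noteq> Leaf}"
    and "A \<in> DT Y" "B \<in> DT Y"
  shows "bilin_ext f A B \<in> DT Y"
  unfolding DT_def
proof (intro CollectI ballI)
  fix t assume "t \<in> Poly_Mapping.keys (bilin_ext f A B)"
  then obtain a where "a \<in> Poly_Mapping.keys A" "t \<in> Poly_Mapping.keys (lin_ext (f a) B)"
    unfolding bilin_ext_eq_lin_ext using keys_lin_ext_subset by fastforce
  moreover from this obtain b where "b \<in> Poly_Mapping.keys B" "t \<in> Poly_Mapping.keys (f a b)"
    using keys_lin_ext_subset by fastforce
  ultimately show "t \<noteq> Leaf \<and> wf_vtree Y t"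
    using assms keys_DT by blast
qed

lemma bilin_ext_star_t:
  "bilin_ext (prec_t q) B C + bilin_ext (succ_t q) B C + smul q (bilin_ext (bul_t q) B C)
     = bilin_ext (star_t q) B C"
  by (simp add: bilin_ext_eq_lin_ext star_t_def lin_ext_add_fun lin_ext_smul_fun)

lemma q_tridendriform_DT:
  fixes Y :: "'y set" and q :: "'k::comm_ring_1"
  shows "q_tridendriform smul (DT Y) (DT_prec q) (DT_succ q) (DT_bul q) q"
proof -
  have module: "0 \<in> DT Y" "a \<in> DT Y \<Longrightarrow> b \<in> DT Y \<Longrightarrow> a + b \<in> DT Y" "a \<in> DT Y \<Longrightarrow> smul c a \<in> DT Y"
    for a b :: "('y, 'k) lin" and c
    unfolding DT_def using keys_add[of a b] keys_smul_subset[of c a] by auto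
  have closed: "bilin_ext (prec_t q) a b \<in> DT Y" "bilin_ext (succ_t q) a b \<in> DT Y"
    "bilin_ext (bul_t q) a b \<in> DT Y" if "a \<in> DT Y" "b \<in> DT Y" for a b
    using that bilin_ext_mem_DT[OF keys_tri_op_t_subset[where opr = Prec]]
      bilin_ext_mem_DT[OF keys_tri_op_t_subset[where opr = Succ]]
      bilin_ext_mem_DT[OF keys_tri_op_t_subset[where opr = Bul]]
    by simp_all
  let ?pr = "bilin_ext (prec_t q)" and ?su = "bilin_ext (succ_t q)" and ?bu = "bilin_ext (bul_t q)"
    and ?st = "bilin_ext (star_t q)"
  have identities: "\<forall>a\<in>DT Y. \<forall>b\<in>DT Y. \<forall>c\<in>DT Y.
      ?pr (?pr a b) c = ?pr a (?st b c) \<and> ?pr (?su a b) c = ?su a (?pr b c) \<and>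
      ?su (?st a b) c = ?su a (?su b c) \<and> ?bu (?su a b) c = ?su a (?bu b c) \<and>
      ?bu (?pr a b) c = ?bu a (?su b c) \<and> ?pr (?bu a b) c = ?bu a (?pr b c) \<and>
      ?bu (?bu a b) c = ?bu a (?bu b c)"
    by (intro ballI conjI; rule bilin_ext_assoc_DT, assumption+,
        rule tridendriform_identities, assumption+)
  show ?thesis
    unfolding q_tridendriform_def Let_def DT_prec_def DT_succ_def DT_bul_def bilin_ext_star_t
    using module closed identities
    by (simp add: bilin_ext_add_left bilin_ext_add_right bilin_ext_smul_left bilin_ext_smul_right)
qed

subsection \<open>Decoration entries and their positions\<close>

fun entries :: "'a vtree \<Rightarrow> 'a list" where
  "entries Leaf = []"
| "entries (Node ys ts) = ys @ concat (map entries ts)"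

lemma nent_eq_length_entries: "nent t = length (entries t)"
  by (induction t) (simp_all add: length_concat o_def cong: map_cong)

lemma set_vtree_eq_set_entries: "set_vtree t = set (entries t)"
  by (induction t) auto

lemma entries_map_vtree: "entries (map_vtree f t) = map f (entries t)"
  by (induction t) (simp_all add: map_concat o_def cong: map_cong)

lemma nent_map_vtree [simp]: "nent (map_vtree f t) = nent t"
  by (simp add: nent_eq_length_entries entries_map_vtree)

text \<open>index_tree off t tags each entry of t with its position, counted from off, in the
  preorder enumeration used by shift_tree.\<close>
fun index_tree :: "nat \<Rightarrow> 'a vtree \<Rightarrow> ('a \<times> nat) vtree"
and index_forest :: "nat \<Rightarrow> 'a vtree list \<Rightarrow> ('a \<times> nat) vtree list" where
  "index_tree off Leaf = Leaf"
| "index_tree off (Node ys ts) =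
     Node (zip ys [off..<off + length ys]) (index_forest (off + length ys) ts)"
| "index_forest off [] = []"
| "index_forest off (t # ts) = index_tree off t # index_forest (off + nent t) ts"

lemma map_fst_index_tree:
  fixes t :: "'a vtree" and ts :: "'a vtree list"
  shows "map_vtree fst (index_tree off t) = t"
    and "map (map_vtree fst) (index_forest off ts) = ts"
  by (induction off t and off ts rule: index_tree_index_forest.induct) auto

lemma upt_add_split: "[a..<a + (m + k)] = [a..<a + m] @ [a + m..<a + m + k]"
  by (metis add.assoc le_add1 upt_add_eq_append)

lemma entries_index_tree:
  fixes t :: "'a vtree" and ts :: "'a vtree list"
  shows "entries (index_tree off t) = zip (entries t) [off..<off + nent t]"
    and "concat (map entries (index_forest off ts))
       = zip (concat (map entries ts)) [off..<off + sum_list (map nent ts)]"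
proof (induction off t and off ts rule: index_tree_index_forest.induct)
  case (2 off ys ts)
  then show ?case
    by (simp add: upt_add_split zip_append)
next
  case (4 off t ts)
  then show ?case
    by (simp add: upt_add_split zip_append nent_eq_length_entries)
qed simp_all

lemma index_tree_map_vtree:
  fixes t :: "'a vtree" and ts :: "'a vtree list"
  shows "index_tree off (map_vtree f t) = map_vtree (map_prod f id) (index_tree off t)"
    and "index_forest off (map (map_vtree f) ts) = map (map_vtree (map_prod f id)) (index_forest off ts)"
  by (induction off t and off ts rule: index_tree_index_forest.induct) (auto simp: zip_map1)

lemma map_plus_upt: "map ((+) i) [j..<k] = [i + j..<i + k]"
  by (induction k) auto

lemma index_tree_offset:
  fixes t :: "'a vtree" and ts :: "'a vtree list"
  shows "index_tree (i + j) t = map_vtree (\<lambda>(y, p). (y, i + p)) (index_tree j t)"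
    and "index_forest (i + j) ts = map (map_vtree (\<lambda>(y, p). (y, i + p))) (index_forest j ts)"
  by (induction j t and j ts rule: index_tree_index_forest.induct)
    (simp_all add: zip_map2 add.assoc flip: map_plus_upt)

definition bump :: "nat set \<Rightarrow> ('x \<times> nat) \<times> nat \<Rightarrow> 'x \<times> nat" where
  "bump S e = (if snd e \<in> S then (fst (fst e), Suc (snd (fst e))) else fst e)"

lemma shift_tree_eq_bump:
  fixes t :: "('x \<times> nat) vtree" and ts :: "('x \<times> nat) vtree list"
  shows "shift_tree S off t = map_vtree (bump S) (index_tree off t)"
    and "shift_forest S off ts = map (map_vtree (bump S)) (index_forest off ts)"
  by (induction S off t and S off ts rule: shift_tree_shift_forest.induct)
    (auto intro!: nth_equalityI simp: bump_def)

lemma shift_tree_cong: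
  assumes "\<And>i. i < nent t \<Longrightarrow> off + i \<in> S \<longleftrightarrow> off' + i \<in> S'"
  shows "shift_tree S off t = shift_tree S' off' t"
proof -
  have "shift_tree S off t = map_vtree (\<lambda>e. bump S (fst e, off + snd e)) (index_tree 0 t)" for S off
    using index_tree_offset(1)[of off 0 t]
    by (simp add: shift_tree_eq_bump vtree.map_comp o_def case_prod_beta)
  moreover have "snd e < nent t" if "e \<in> set_vtree (index_tree 0 t)" for e
    using that by (auto simp: set_vtree_eq_set_entries entries_index_tree set_zip)
  ultimately show ?thesis
    using assms by (auto simp: bump_def intro!: vtree.map_cong0)
qed

lemma bump_empty [simp]: "bump {} = fst"
  by (simp add: bump_def fun_eq_iff)

lemma shift_tree_empty [simp]: "shift_tree {} off t = t"
  by (simp add: shift_tree_eq_bump map_fst_index_tree)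

lemma wf_vtree_map_vtree: "wf_vtree Y (map_vtree f t) = wf_vtree (f -` Y) t"
  by (induction t) auto

lemma wf_vtree_mono: "A \<subseteq> B \<Longrightarrow> wf_vtree A t \<Longrightarrow> wf_vtree B t"
  by (induction t) auto

lemma wf_vtree_shift_tree:
  assumes "wf_vtree (X \<times> UNIV) t"
  shows "wf_vtree (X \<times> UNIV) (shift_tree S off t)"
proof -
  have "wf_vtree (fst -` (X \<times> UNIV)) (index_tree off t)"
    using assms map_fst_index_tree(1)[of off t] wf_vtree_map_vtree by metis
  then have "wf_vtree (bump S -` (X \<times> UNIV)) (index_tree off t)"
    by (rule wf_vtree_mono[rotated]) (auto simp: bump_def)
  then show ?thesis
    by (simp add: shift_tree_eq_bump wf_vtree_map_vtree)
qed

lemma shift_tree_eq_Leaf_iff [simp]: "shift_tree S off t = Leaf \<longleftrightarrow> t = Leaf"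
  by (cases t) auto

lemma star_map_vtree:
  "star q (map_vtree f a) (map_vtree f b) = lin_map (map_vtree f) (star q a b)"
proof (induction q a b rule: star.induct)
  case (4 q xs ts ys ss)
  show ?case
  proof (cases "ts = [] \<or> ss = []")
    case False
    with "4.IH" show ?thesis
      by (simp add: last_map hd_map o_def map_butlast[symmetric] map_tl[symmetric])
  qed auto
qed auto

lemma tri_op_t_map_vtree:
  assumes "wf_vtree Y a" "wf_vtree Y b"
  shows "tri_op_t opr q (map_vtree g a) (map_vtree g b) = lin_map (map_vtree g) (tri_op_t opr q a b)"
proof (cases "a = Leaf \<or> b = Leaf")
  case True
  then show ?thesis
    by (cases opr; cases a; cases b) auto
next
  case False
  then obtain xs ts ys ss where ab: "a = Node xs ts" "b = Node ys ss"
    by (meson vtree.exhaust)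
  with assms have "ts \<noteq> []" "ss \<noteq> []"
    by auto
  with assms ab star_map_vtree[of q g "last ts" b] star_map_vtree[of q g a "hd ss"]
    star_map_vtree[of q g "last ts" "hd ss"]
  show ?thesis
    by (cases opr) (auto simp: last_map hd_map o_def map_butlast[symmetric] map_tl[symmetric])
qed

lemma mset_entries_lin_map:
  assumes "u \<in> Poly_Mapping.keys (lin_map g P)"
    and "\<And>v. v \<in> Poly_Mapping.keys P \<Longrightarrow> mset (entries (g v)) = M"
  shows "mset (entries u) = M"
  using assms keys_lin_map_subset[of g P] by blast

lemma mset_entries_star:
  "u \<in> Poly_Mapping.keys (star q a b) \<Longrightarrow> mset (entries u) = mset (entries a) + mset (entries b)"
proof (induction q a b arbitrary: u rule: star.induct)
  case (4 q xs ts ys ss)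
  then have ne: "ts \<noteq> []" "ss \<noteq> []"
    by (auto split: if_splits)
  then obtain ba la hb sb where split: "ts = ba @ [la]" "ss = hb # sb"
    by (metis list.exhaust rev_exhaust)
  let ?A = "lin_map (\<lambda>v. Node xs (butlast ts @ [v])) (star q (last ts) (Node ys ss))"
  let ?B = "lin_map (\<lambda>v. Node ys (v # tl ss)) (star q (Node xs ts) (hd ss))"
  let ?C = "lin_map (\<lambda>v. Node (xs @ ys) (butlast ts @ [v] @ tl ss)) (star q (last ts) (hd ss))"
  have "u \<in> Poly_Mapping.keys ?A \<union> Poly_Mapping.keys ?B \<union> Poly_Mapping.keys ?C"
    using "4.prems" ne keys_add_smul_subset[of ?A ?B q ?C] by auto
  then consider "u \<in> Poly_Mapping.keys ?A" | "u \<in> Poly_Mapping.keys ?B" | "u \<in> Poly_Mapping.keys ?C"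
    by blast
  then show ?case
  proof cases
    case 1
    then show ?thesis
      by (rule mset_entries_lin_map) (use "4.IH"(1) ne split in simp)
  next
    case 2
    then show ?thesis
      by (rule mset_entries_lin_map) (use "4.IH"(2) ne split in \<open>simp add: add_ac\<close>)
  next
    case 3
    then show ?thesis
      by (rule mset_entries_lin_map) (use "4.IH"(3) ne split in \<open>simp add: add_ac\<close>)
  qed
qed auto

lemma mset_entries_tri_op_t:
  assumes wf: "wf_vtree Y a" "wf_vtree Y b" and u: "u \<in> Poly_Mapping.keys (tri_op_t opr q a b)"
  shows "mset (entries u) = mset (entries a) + mset (entries b)"
proof (cases "a = Leaf \<or> b = Leaf")
  case True
  with u show ?thesis
    by (cases opr; cases a; cases b) (auto split: if_splits)
next
  case False
  then obtain xs ts ys ss where ab: "a = Node xs ts" "b = Node ys ss"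
    by (meson vtree.exhaust)
  with wf have "ts \<noteq> []" "ss \<noteq> []"
    by auto
  then obtain ba la hb sb where split: "ts = ba @ [la]" "ss = hb # sb"
    by (metis list.exhaust rev_exhaust)
  with u ab show ?thesis
    by (cases opr) (auto elim!: mset_entries_lin_map dest: mset_entries_star)
qed

subsection \<open>The derivation\<close>

lemma d_tree_map_fst:
  fixes u :: "(('x \<times> nat) \<times> nat) vtree" and lam :: "'k::comm_ring_1"
  assumes "distinct (map snd (entries u))"
  shows "d_tree lam (map_vtree fst u) = (\<Sum>S\<in>Pow (set (map snd (entries u))) - {{}}.
           smul (lam ^ (card S - 1)) (Poly_Mapping.single (map_vtree (bump S) u) 1))"
proof -
  define T where "T = map snd (entries u)"
  define n where "n = length T"
  have nent_u: "nent u = n"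
    by (simp add: T_def n_def nent_eq_length_entries)
  have inj: "inj_on (nth T) {..<n}"
    using assms by (simp add: T_def n_def inj_on_nth)
  have shift: "shift_tree S 0 (map_vtree fst u) = map_vtree (bump (nth T ` S)) u"
    if S: "S \<subseteq> {..<n}" for S
  proof -
    have "shift_tree S 0 (map_vtree fst u) = map_vtree (bump S \<circ> map_prod fst id) (index_tree 0 u)"
      by (simp add: shift_tree_eq_bump index_tree_map_vtree vtree.map_comp)
    also have "\<dots> = map_vtree (bump (nth T ` S) \<circ> fst) (index_tree 0 u)"
    proof (rule vtree.map_cong0)
      fix e assume "e \<in> set_vtree (index_tree 0 u)"
      then obtain p where p: "p < n" "e = (entries u ! p, p)"
        by (auto simp: set_vtree_eq_set_entries entries_index_tree set_zip nent_u)
      moreover have "T ! p \<in> nth T ` S \<longleftrightarrow> p \<in> S"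
        using inj S p(1) by (auto simp: inj_on_image_mem_iff)
      ultimately show "(bump S \<circ> map_prod fst id) e = (bump (nth T ` S) \<circ> fst) e"
        by (simp add: bump_def T_def n_def)
    qed
    finally show ?thesis
      by (simp add: vtree.map_comp[symmetric] map_fst_index_tree)
  qed
  have "d_tree lam (map_vtree fst u) = (\<Sum>S\<in>Pow {0..<n} - {{}}.
       smul (lam ^ (card S - 1)) (Poly_Mapping.single (map_vtree (bump (nth T ` S)) u) 1))"
    unfolding d_tree_def nent_map_vtree nent_u
    by (intro sum.cong refl) (simp add: shift atLeast0LessThan)
  also have "\<dots> = (\<Sum>S\<in>Pow (set T) - {{}}.
       smul (lam ^ (card S - 1)) (Poly_Mapping.single (map_vtree (bump S) u) 1))"
  proof (rule sum.reindex_bij_witness[where j = "\<lambda>S. nth T ` S" and i = "\<lambda>S'. {p\<in>{0..<n}. T ! p \<in> S'}"])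
    fix S assume S: "S \<in> Pow {0..<n} - {{}}"
    then show "{p \<in> {0..<n}. T ! p \<in> nth T ` S} = S"
      using inj by (auto simp: atLeast0LessThan) (metis inj_onD lessThan_iff subsetD)
    show "nth T ` S \<in> Pow (set T) - {{}}"
      using S by (auto simp: n_def)
    have "card (nth T ` S) = card S"
      using S inj by (intro card_image) (auto simp: atLeast0LessThan intro: inj_on_subset)
    then show "smul (lam ^ (card (nth T ` S) - 1)) (Poly_Mapping.single (map_vtree (bump (nth T ` S)) u) 1)
        = smul (lam ^ (card S - 1)) (Poly_Mapping.single (map_vtree (bump (nth T ` S)) u) 1)"
      by simp
  next
    fix S' assume "S' \<in> Pow (set T) - {{}}"
    then show "nth T ` {p \<in> {0..<n}. T ! p \<in> S'} = S'" "{p \<in> {0..<n}. T ! p \<in> S'} \<in> Pow {0..<n} - {{}}"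
      by (auto simp: n_def image_iff in_set_conv_nth subset_iff)
  qed
  finally show ?thesis
    by (simp add: T_def)
qed

definition weight :: "'k::comm_ring_1 \<Rightarrow> nat set \<Rightarrow> 'k" where
  "weight lam S = (if S = {} then 0 else lam ^ (card S - 1))"

lemma weight_image: "inj_on f S \<Longrightarrow> weight lam (f ` S) = weight lam S"
  by (simp add: weight_def card_image)

text \<open>The weight lam^(|S| - 1) is what makes d_X a derivation of weight lam: for nonempty
  disjoint S and S', lam^(|S| + |S'| - 1) = lam * lam^(|S| - 1) * lam^(|S'| - 1).\<close>
lemma weight_Un:
  assumes "finite S" "finite S'" "S \<inter> S' = {}"
  shows "weight lam (S \<union> S') = (if S' = {} then weight lam S else 0)
           + (if S = {} then weight lam S' else 0) + lam * (weight lam S * weight lam S')"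
proof (cases "S = {} \<or> S' = {}")
  case False
  with assms have "card S > 0" "card S' > 0"
    by auto
  then have exp: "card S + card S' - 1 = Suc ((card S - 1) + (card S' - 1))"
    by simp
  have "weight lam (S \<union> S') = lam ^ (card S + card S' - 1)"
    using assms False by (simp add: weight_def card_Un_disjoint)
  also have "\<dots> = lam * (lam ^ (card S - 1) * lam ^ (card S' - 1))"
    by (simp only: exp power_Suc power_add)
  finally show ?thesis
    using False by (simp add: weight_def)
qed (auto simp: weight_def)

lemma sum_Pow_weight:
  fixes F :: "nat set \<Rightarrow> ('a \<Rightarrow>\<^sub>0 'k::comm_ring_1)"
  assumes "finite A"
  shows "(\<Sum>S\<in>Pow A - {{}}. smul (lam ^ (card S - 1)) (F S)) = (\<Sum>S\<in>Pow A. smul (weight lam S) (F S))"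
proof -
  have "(\<Sum>S\<in>Pow A. smul (weight lam S) (F S))
      = smul (weight lam {}) (F {}) + (\<Sum>S\<in>Pow A - {{}}. smul (weight lam S) (F S))"
    using assms by (intro sum.remove) auto
  then show ?thesis
    by (simp add: weight_def)
qed

lemma lin_ext_d_tree:
  "lin_ext F (d_tree lam t) = (\<Sum>S\<in>Pow {0..<nent t}. smul (weight lam S) (F (shift_tree S 0 t)))"
  unfolding d_tree_def lin_ext_sum lin_ext_smul lin_ext_single smul_one
  by (rule sum_Pow_weight) simp

lemma sum_Pow_upt_add:
  fixes g :: "nat set \<Rightarrow> 'a::comm_monoid_add"
  shows "(\<Sum>S\<in>Pow {0..<m + n}. g S) = (\<Sum>S\<in>Pow {0..<m}. \<Sum>S'\<in>Pow {0..<n}. g (S \<union> (\<lambda>i. i + m) ` S'))"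
proof -
  have "(\<Sum>S\<in>Pow {0..<m + n}. g S) = (\<Sum>(S, S')\<in>Pow {0..<m} \<times> Pow {0..<n}. g (S \<union> (\<lambda>i. i + m) ` S'))"
  proof (rule sum.reindex_bij_witness[where j = "\<lambda>S. (S \<inter> {0..<m}, {i. i + m \<in> S})"
        and i = "\<lambda>(S, S'). S \<union> (\<lambda>i. i + m) ` S'"])
    fix S assume S: "S \<in> Pow {0..<m + n}"
    have "S \<inter> {0..<m} \<union> (\<lambda>i. i + m) ` {i. i + m \<in> S} = S"
    proof (intro set_eqI iffI)
      fix x assume "x \<in> S"
      then show "x \<in> S \<inter> {0..<m} \<union> (\<lambda>i. i + m) ` {i. i + m \<in> S}"
        by (cases "x < m") (auto simp: image_iff intro!: exI[of _ "x - m"])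
    qed auto
    then show "(case (S \<inter> {0..<m}, {i. i + m \<in> S}) of (S, S') \<Rightarrow> S \<union> (\<lambda>i. i + m) ` S') = S"
      and "(case (S \<inter> {0..<m}, {i. i + m \<in> S}) of (S, S') \<Rightarrow> g (S \<union> (\<lambda>i. i + m) ` S')) = g S"
      by simp_all
    show "(S \<inter> {0..<m}, {i. i + m \<in> S}) \<in> Pow {0..<m} \<times> Pow {0..<n}"
      using S by auto
  next
    fix p assume "p \<in> Pow {0..<m} \<times> Pow {0..<n}"
    then show "(case p of (S, S') \<Rightarrow> S \<union> (\<lambda>i. i + m) ` S') \<in> Pow {0..<m + n}"
      and "((case p of (S, S') \<Rightarrow> S \<union> (\<lambda>i. i + m) ` S') \<inter> {0..<m},
            {i. i + m \<in> (case p of (S, S') \<Rightarrow> S \<union> (\<lambda>i. i + m) ` S')}) = p"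
      by auto
  qed
  then show ?thesis
    by (simp add: sum.cartesian_product)
qed

lemma sum_sum_weight_Un:
  fixes G :: "nat set \<Rightarrow> nat set \<Rightarrow> ('a \<Rightarrow>\<^sub>0 'k::comm_ring_1)"
  assumes "finite A" "finite B" "{} \<in> A" "{} \<in> B"
    and "\<And>S S'. S \<in> A \<Longrightarrow> S' \<in> B \<Longrightarrow> c S S' = (if S' = {} then weight lam S else 0)
           + (if S = {} then weight lam S' else 0) + lam * (weight lam S * weight lam S')"
  shows "(\<Sum>S\<in>A. \<Sum>S'\<in>B. smul (c S S') (G S S')) =
     (\<Sum>S\<in>A. smul (weight lam S) (G S {})) + (\<Sum>S'\<in>B. smul (weight lam S') (G {} S')) +
     smul lam (\<Sum>S\<in>A. \<Sum>S'\<in>B. smul (weight lam S * weight lam S') (G S S'))"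
proof -
  have first: "(\<Sum>S\<in>A. smul (weight lam S) (G S {}))
      = (\<Sum>S\<in>A. \<Sum>S'\<in>B. smul (if S' = {} then weight lam S else 0) (G S S'))"
    using assms by (simp add: if_distrib[of "\<lambda>c. smul c _"] cong: if_cong)
  have "(\<Sum>S\<in>A. \<Sum>S'\<in>B. smul (if S = {} then weight lam S' else 0) (G S S'))
      = (\<Sum>S\<in>A. if S = {} then (\<Sum>S'\<in>B. smul (weight lam S') (G S S')) else 0)"
    by (intro sum.cong) auto
  also have "\<dots> = (\<Sum>S'\<in>B. smul (weight lam S') (G {} S'))"
    using assms by (simp add: sum.delta')
  finally have second: "(\<Sum>S'\<in>B. smul (weight lam S') (G {} S'))
      = (\<Sum>S\<in>A. \<Sum>S'\<in>B. smul (if S = {} then weight lam S' else 0) (G S S'))" ..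
  have third: "smul lam (\<Sum>S\<in>A. \<Sum>S'\<in>B. smul (weight lam S * weight lam S') (G S S'))
      = (\<Sum>S\<in>A. \<Sum>S'\<in>B. smul (lam * (weight lam S * weight lam S')) (G S S'))"
    by (simp add: smul_sum)
  show ?thesis
    unfolding first second third
    by (simp add: sum.distrib[symmetric] smul_add_left[symmetric] assms(5) cong: sum.cong)
qed

text \<open>Tag the entries of a and b by their positions in the juxtaposition a b.  The
  operations move the tagged entries around without changing them, so the positions
  of the entries in a summand of the result are read off from the tags.\<close>
lemma lin_ext_d_tree_tri_op_t:
  fixes a b :: "('x \<times> nat) vtree" and lam q :: "'k::comm_ring_1" and opr :: tri_op
  assumes wf: "wf_vtree Y a" "wf_vtree Y b"
  shows "lin_ext (d_tree lam) (tri_op_t opr q a b) = (\<Sum>S\<in>Pow {0..<nent a + nent b}.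
           smul (weight lam S) (tri_op_t opr q (shift_tree S 0 a) (shift_tree S (nent a) b)))"
proof -
  define n where "n = nent a + nent b"
  define ea where "ea = index_tree 0 a"
  define eb where "eb = index_tree (nent a) b"
  have wf_tagged: "wf_vtree (fst -` Y) ea" "wf_vtree (fst -` Y) eb"
    using wf by (simp_all add: ea_def eb_def flip: wf_vtree_map_vtree add: map_fst_index_tree)
  let ?P = "tri_op_t opr q ea eb"
  let ?F = "\<lambda>S. tri_op_t opr q (shift_tree S 0 a) (shift_tree S (nent a) b)"
  have f_fst: "tri_op_t opr q (map_vtree g ea) (map_vtree g eb) = lin_map (map_vtree g) ?P" for g
    by (rule tri_op_t_map_vtree[OF wf_tagged])
  have tags: "distinct (map snd (entries u)) \<and> set (map snd (entries u)) = {0..<n}"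
    if u: "u \<in> Poly_Mapping.keys ?P" for u
  proof -
    have "mset (map snd (entries u)) = mset (map snd (entries ea)) + mset (map snd (entries eb))"
      using mset_entries_tri_op_t[OF wf_tagged u] by (simp add: mset_map)
    also have "\<dots> = mset [0..<n]"
      by (simp add: ea_def eb_def n_def entries_index_tree nent_eq_length_entries
          upt_add_eq_append[of 0 "length (entries a)"])
    finally show ?thesis
      by (metis distinct_upt mset_eq_imp_distinct_iff mset_eq_setD set_upt)
  qed
  have "lin_ext (d_tree lam) (tri_op_t opr q a b) = lin_ext (\<lambda>u. d_tree lam (map_vtree fst u)) ?P"
    using f_fst[of fst] by (simp add: ea_def eb_def map_fst_index_tree lin_map_def lin_ext_lin_ext)
  also have "\<dots> = lin_ext (\<lambda>u. \<Sum>S\<in>Pow {0..<n} - {{}}.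
      smul (lam ^ (card S - 1)) (Poly_Mapping.single (map_vtree (bump S) u) 1)) ?P"
    using tags by (intro lin_ext_cong) (simp add: d_tree_map_fst)
  also have "\<dots> = (\<Sum>S\<in>Pow {0..<n} - {{}}. smul (lam ^ (card S - 1)) (?F S))"
    by (simp add: lin_ext_sum_fun lin_ext_smul_fun shift_tree_eq_bump f_fst
        flip: lin_map_def ea_def eb_def)
  also have "\<dots> = (\<Sum>S\<in>Pow {0..<n}. smul (weight lam S) (?F S))"
    by (rule sum_Pow_weight) simp
  finally show ?thesis
    by (simp add: n_def)
qed

lemma d_tree_tri_op_t:
  fixes a b :: "('x \<times> nat) vtree" and lam q :: "'k::comm_ring_1"
  assumes "wf_vtree Y a" "wf_vtree Y b"
  shows "lin_ext (d_tree lam) (tri_op_t opr q a b) =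
     lin_ext (\<lambda>t. tri_op_t opr q t b) (d_tree lam a) + lin_ext (tri_op_t opr q a) (d_tree lam b) +
     smul lam (lin_ext (\<lambda>t. lin_ext (tri_op_t opr q t) (d_tree lam b)) (d_tree lam a))"
    (is "_ = ?rhs")
proof -
  define m where "m = nent a"
  define n where "n = nent b"
  define G where "G S S' = tri_op_t opr q (shift_tree S 0 a) (shift_tree S' 0 b)" for S S'
  let ?U = "\<lambda>S S'. S \<union> (\<lambda>i. i + m) ` S'"
  have "lin_ext (d_tree lam) (tri_op_t opr q a b)
      = (\<Sum>S\<in>Pow {0..<m}. \<Sum>S'\<in>Pow {0..<n}. smul (weight lam (?U S S')) (G S S'))"
    unfolding lin_ext_d_tree_tri_op_t[OF assms] sum_Pow_upt_add m_def[symmetric] n_def[symmetric]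
  proof (intro sum.cong refl)
    fix S S' assume "S \<in> Pow {0..<m}" "S' \<in> Pow {0..<n}"
    then have "shift_tree (?U S S') 0 a = shift_tree S 0 a"
      and "shift_tree (?U S S') m b = shift_tree S' 0 b"
      by (auto simp: m_def n_def intro!: shift_tree_cong)
    then show "smul (weight lam (?U S S'))
        (tri_op_t opr q (shift_tree (?U S S') 0 a) (shift_tree (?U S S') m b))
      = smul (weight lam (?U S S')) (G S S')"
      by (simp add: G_def)
  qed
  also have "\<dots> = (\<Sum>S\<in>Pow {0..<m}. smul (weight lam S) (G S {}))
      + (\<Sum>S'\<in>Pow {0..<n}. smul (weight lam S') (G {} S'))
      + smul lam (\<Sum>S\<in>Pow {0..<m}. \<Sum>S'\<in>Pow {0..<n}. smul (weight lam S * weight lam S') (G S S'))"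
  proof (rule sum_sum_weight_Un)
    fix S S' assume "S \<in> Pow {0..<m}" "S' \<in> Pow {0..<n}"
    then have "finite S" "finite ((\<lambda>i. i + m) ` S')" "S \<inter> (\<lambda>i. i + m) ` S' = {}"
      by (auto intro: finite_subset)
    then show "weight lam (?U S S') = (if S' = {} then weight lam S else 0)
        + (if S = {} then weight lam S' else 0) + lam * (weight lam S * weight lam S')"
      by (simp add: weight_Un weight_image)
  qed auto
  also have "\<dots> = ?rhs"
    by (simp add: lin_ext_d_tree G_def m_def n_def smul_sum)
  finally show ?thesis .
qed

lemma d_X_bilin_ext_tri_op_t:
  fixes A B :: "('x \<times> nat, 'k::comm_ring_1) lin" and q :: 'k and opr :: tri_op
  assumes "A \<in> DT Y" "B \<in> DT Y"
  defines "F \<equiv> bilin_ext (tri_op_t opr q)"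
  shows "d_X lam (F A B) = F (d_X lam A) B + F A (d_X lam B) + smul lam (F (d_X lam A) (d_X lam B))"
proof -
  let ?f = "tri_op_t opr q" and ?d = "d_tree lam"
  have "d_X lam (F A B) = lin_ext (\<lambda>a. lin_ext (\<lambda>b. lin_ext ?d (?f a b)) B) A"
    by (simp add: F_def d_X_def bilin_ext_eq_lin_ext lin_ext_lin_ext)
  also have "\<dots> = lin_ext (\<lambda>a. lin_ext (\<lambda>b. lin_ext (\<lambda>t. ?f t b) (?d a) + lin_ext (\<lambda>s. ?f a s) (?d b)
      + smul lam (lin_ext (\<lambda>t. lin_ext (\<lambda>s. ?f t s) (?d b)) (?d a))) B) A"
    using assms(1,2) keys_DT by (intro lin_ext_cong d_tree_tri_op_t) blast+
  also have "\<dots> = F (d_X lam A) B + F A (d_X lam B) + smul lam (F (d_X lam A) (d_X lam B))"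
    by (simp add: F_def d_X_def bilin_ext_eq_lin_ext lin_ext_lin_ext lin_ext_add_fun lin_ext_smul_fun
        lin_ext_commute[of _ B])
  finally show ?thesis .
qed

lemma keys_d_tree_subset:
  "Poly_Mapping.keys (d_tree lam t) \<subseteq> (\<lambda>S. shift_tree S 0 t) ` Pow {0..<nent t}"
proof
  fix u assume "u \<in> Poly_Mapping.keys (d_tree lam t)"
  then obtain S where "S \<in> Pow {0..<nent t} - {{}}"
    and "u \<in> Poly_Mapping.keys (smul (lam ^ (card S - 1)) (Poly_Mapping.single (shift_tree S 0 t) 1))"
    unfolding d_tree_def by (auto dest: keys_sum[THEN subsetD])
  then show "u \<in> (\<lambda>S. shift_tree S 0 t) ` Pow {0..<nent t}"
    by (auto dest: keys_smul_subset[THEN subsetD] split: if_splits)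
qed

lemma d_X_mem_DT:
  assumes "A \<in> DT (X \<times> UNIV)"
  shows "d_X lam A \<in> DT (X \<times> UNIV)"
  unfolding DT_def
proof (intro CollectI ballI)
  fix u assume "u \<in> Poly_Mapping.keys (d_X lam A)"
  then obtain t where t: "t \<in> Poly_Mapping.keys A" "u \<in> Poly_Mapping.keys (d_tree lam t)"
    unfolding d_X_def using keys_lin_ext_subset by fastforce
  then obtain S where "u = shift_tree S 0 t"
    using keys_d_tree_subset by blast
  with keys_DT[OF assms t(1)] show "u \<noteq> Leaf \<and> wf_vtree (X \<times> UNIV) u"
    by (simp add: wf_vtree_shift_tree)
qed

theorem proposition5p3:
  fixes X :: "'x set" and q lam :: "'k::comm_ring_1"
  shows "differential_q_tridendriform smul (DT (X \<times> (UNIV :: nat set)))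
           (DT_prec q) (DT_succ q) (DT_bul q) (d_X lam) q lam"
proof -
  let ?T = "DT (X \<times> (UNIV :: nat set)) :: ('x \<times> nat, 'k) lin set"
  have "\<forall>op\<in>{DT_prec q, DT_succ q, DT_bul q}. \<forall>A\<in>?T. \<forall>B\<in>?T.
      d_X lam (op A B) = op (d_X lam A) B + op A (d_X lam B) + smul lam (op (d_X lam A) (d_X lam B))"
    unfolding DT_prec_def DT_succ_def DT_bul_def
    using d_X_bilin_ext_tri_op_t[where opr = Prec] d_X_bilin_ext_tri_op_t[where opr = Succ]
      d_X_bilin_ext_tri_op_t[where opr = Bul]
    by auto
  moreover have "\<forall>A\<in>?T. \<forall>B\<in>?T. d_X lam (A + B) = d_X lam A + d_X lam B"
    "\<forall>c. \<forall>A\<in>?T. d_X lam (smul c A) = smul c (d_X lam A)"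
    by (simp_all add: d_X_def lin_ext_add lin_ext_smul)
  ultimately show ?thesis
    unfolding differential_q_tridendriform_def
    using q_tridendriform_DT d_X_mem_DT by blast
qed

end
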